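(* Let $r\in\mathbb N$ and let $M$ be the sub-add move matrix. For every $0\le i<2r$, each vertex of $\mathcal P_i$ has a unique child in $\Gamma_{M,\,2^r}$, and this child lies in $\mathcal P_{i+1}$. The vertex $(0,0)\in\mathcal P_{2r}$ is its own unique child.
   Context: The sub-add move matrix is $M=\begin{pmatrix}1&-1\\1&1\end{pmatrix}$. For $n\in\mathbb N$, $\Gamma_{M,\,n}$ is the directed graph with vertex set $\mathbb Z_n^2$ and arcs $((a,b),(a-b,a+b))$ for all $(a,b)\in\mathbb Z_n^2$ (computed mod $n$; loops allowed). If $({\bf v},{\bf w})$ is an arc, ${\bf v}$ is a parent of ${\bf w}$ and ${\bf w}$ a child of ${\bf v}$. For $n=2^r$, partition $\mathbb Z_{2^r}^2$ as follows: for $0\le t\le r-1$, $\mathcal P_{2t}$ is the set of pairs $(2^tx,2^ty)\in\mathbb Z_{2^r}^2$ with $x,y$ integers exactly one of which is odd, and $\mathcal P_{2t+1}$ is the set of pairs $(2^tx,2^ty)$ with $x,y$ both odd; $\mathcal P_{2r}=\{(0,0)\}$. (Parities are well defined since $x,y$ are determined modulo $2^{r-t}$ with $r-t\ge1$.) *)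

theory Defs
  imports Main
begin

definition Zn2 :: "nat \<Rightarrow> (int \<times> int) set" where
  "Zn2 n = {0..<int n} \<times> {0..<int n}"

definition subadd_M :: "int \<times> int \<Rightarrow> int \<times> int" where
  "subadd_M v = (fst v - snd v, fst v + snd v)"

definition modpair :: "nat \<Rightarrow> int \<times> int \<Rightarrow> int \<times> int" where
  "modpair n v = (fst v mod int n, snd v mod int n)"

definition Gamma_arcs :: "nat \<Rightarrow> ((int \<times> int) \<times> (int \<times> int)) set" where
  "Gamma_arcs n = {(v, w). v \<in> Zn2 n \<and> w = modpair n (subadd_M v)}"

definition is_child :: "nat \<Rightarrow> int \<times> int \<Rightarrow> int \<times> int \<Rightarrow> bool" where
  "is_child n v w \<longleftrightarrow> (v, w) \<in> Gamma_arcs n"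

definition Pcls :: "nat \<Rightarrow> nat \<Rightarrow> (int \<times> int) set" where
  "Pcls r i =
    (if i = 2 * r then {(0, 0)}
     else if i < 2 * r then
       (if even i then
          {modpair (2 ^ r) (2 ^ (i div 2) * x, 2 ^ (i div 2) * y) | x y :: int. odd x \<noteq> odd y}
        else
          {modpair (2 ^ r) (2 ^ (i div 2) * x, 2 ^ (i div 2) * y) | x y :: int. odd x \<and> odd y})
     else {})"

end

theory Submission
  imports Defs
begin

text \<open>Identify \<open>(a, b)\<close> with the Gaussian integer \<open>a + b i\<close>. The move is multiplication by
  \<open>1 + i\<close>, and \<open>\<P>\<^sub>j\<close> consists of the residues of \<open>(1 + i)\<close>-adic valuation exactly \<open>j\<close>
  (recall \<open>2 = -i (1 + i)\<^sup>2\<close>), so every move raises the class index by one. Concretely: if exactly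
  one of \<open>x, y\<close> is odd then \<open>x - y\<close> and \<open>x + y\<close> are both odd; if both are odd then
  \<open>(x - y, x + y) = 2 (x', y')\<close> with exactly one of \<open>x', y'\<close> odd, since \<open>x' + y' = x\<close>; and
  once the power of two reaches \<open>2\<^sup>r\<close> the residue is \<open>(0, 0)\<close>.\<close>

lemma is_child_iff: "is_child n v w \<longleftrightarrow> v \<in> Zn2 n \<and> w = modpair n (subadd_M v)"
  by (simp add: is_child_def Gamma_arcs_def)

lemma ex1_child: "v \<in> Zn2 n \<Longrightarrow> \<exists>!w. is_child n v w"
  by (simp add: is_child_iff)

lemma modpair_subadd_M_modpair:
  "modpair n (subadd_M (modpair n (c * x, c * y))) = modpair n (c * (x - y), c * (x + y))"
  by (simp add: modpair_def subadd_M_def mod_diff_eq mod_add_eq algebra_simps)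

lemma half_diff_and_half_sum_one_odd_if_both_odd:
  fixes x y :: int
  assumes "odd x" and "odd y"
  shows "odd ((x - y) div 2) \<noteq> odd ((x + y) div 2)"
proof -
  have "(x - y) div 2 + (x + y) div 2 = x"
    using assms by (auto elim!: oddE)
  then show ?thesis
    using \<open>odd x\<close> by (metis odd_add)
qed

lemma Pcls_even:
  "t < r \<Longrightarrow> Pcls r (2 * t) =
     {modpair (2 ^ r) (2 ^ t * x, 2 ^ t * y) | x y :: int. odd x \<noteq> odd y}"
  by (simp add: Pcls_def)

lemma Pcls_odd:
  "t < r \<Longrightarrow> Pcls r (2 * t + 1) =
     {modpair (2 ^ r) (2 ^ t * x, 2 ^ t * y) | x y :: int. odd x \<and> odd y}"
  by (simp add: Pcls_def)

lemma Pcls_top: "Pcls r (2 * r) = {(0, 0)}"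
  by (simp add: Pcls_def)

lemma Pcls_subset_Zn2: "Pcls r i \<subseteq> Zn2 (2 ^ r)"
  by (auto simp: Pcls_def Zn2_def modpair_def)

lemma child_of_Pcls_even:
  assumes "t < r" and "v \<in> Pcls r (2 * t)"
  shows "modpair (2 ^ r) (subadd_M v) \<in> Pcls r (2 * t + 1)"
proof -
  obtain x y :: int where "odd x \<noteq> odd y" and v: "v = modpair (2 ^ r) (2 ^ t * x, 2 ^ t * y)"
    using assms by (auto simp: Pcls_even)
  have "odd (x - y) \<and> odd (x + y)"
    using \<open>odd x \<noteq> odd y\<close> by auto
  moreover have child:
      "modpair (2 ^ r) (subadd_M v) = modpair (2 ^ r) (2 ^ t * (x - y), 2 ^ t * (x + y))"
    unfolding v by (rule modpair_subadd_M_modpair)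
  ultimately show ?thesis
    unfolding child Pcls_odd[OF \<open>t < r\<close>] by blast
qed

lemma child_of_Pcls_odd:
  assumes "t < r" and "v \<in> Pcls r (2 * t + 1)"
  shows "modpair (2 ^ r) (subadd_M v) \<in> Pcls r (2 * (t + 1))"
proof -
  obtain x y :: int where "odd x" "odd y" and v: "v = modpair (2 ^ r) (2 ^ t * x, 2 ^ t * y)"
    using assms(2) unfolding Pcls_odd[OF assms(1)] by blast
  define x' y' where "x' = (x - y) div 2" and "y' = (x + y) div 2"
  have parity: "odd x' \<noteq> odd y'"
    unfolding x'_def y'_def using \<open>odd x\<close> \<open>odd y\<close>
    by (rule half_diff_and_half_sum_one_odd_if_both_odd)
  have "x - y = 2 * x'" "x + y = 2 * y'"
    unfolding x'_def y'_def using \<open>odd x\<close> \<open>odd y\<close> by (auto elim!: oddE)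
  then have child:
      "modpair (2 ^ r) (subadd_M v) = modpair (2 ^ r) (2 ^ (t + 1) * x', 2 ^ (t + 1) * y')"
    unfolding v modpair_subadd_M_modpair by (simp add: ac_simps)
  show ?thesis
  proof (cases "t + 1 = r")
    case True
    then show ?thesis
      unfolding child by (simp add: Pcls_top modpair_def)
  next
    case False
    with \<open>t < r\<close> have "t + 1 < r" by simp
    then show ?thesis
      unfolding child Pcls_even[OF \<open>t + 1 < r\<close>] using parity by blast
  qed
qed

lemma child_of_Pcls:
  assumes "i < 2 * r" and "v \<in> Pcls r i"
  shows "modpair (2 ^ r) (subadd_M v) \<in> Pcls r (i + 1)"
proof (cases "even i")
  case True
  then obtain t where "i = 2 * t" by (rule evenE)
  then show ?thesis
    using assms child_of_Pcls_even[of t r v] by simp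
next
  case False
  then obtain t where "i = 2 * t + 1" by (rule oddE)
  then show ?thesis
    using assms child_of_Pcls_odd[of t r v] by simp
qed

theorem proposition5p2:
  fixes r :: nat
  shows "(\<forall>i < 2 * r. \<forall>v \<in> Pcls r i.
            (\<exists>!w. is_child (2 ^ r) v w) \<and>
            (\<forall>w. is_child (2 ^ r) v w \<longrightarrow> w \<in> Pcls r (i + 1)))
         \<and> (0, 0) \<in> Pcls r (2 * r)
         \<and> (\<exists>!w. is_child (2 ^ r) (0, 0) w)
         \<and> is_child (2 ^ r) (0, 0) (0, 0)"
proof -
  have origin: "(0, 0) \<in> Zn2 (2 ^ r)"
    by (simp add: Zn2_def)
  have "\<forall>i < 2 * r. \<forall>v \<in> Pcls r i.
          (\<exists>!w. is_child (2 ^ r) v w) \<and>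
          (\<forall>w. is_child (2 ^ r) v w \<longrightarrow> w \<in> Pcls r (i + 1))"
  proof (intro allI impI ballI conjI)
    fix i v
    assume "i < 2 * r" and "v \<in> Pcls r i"
    then show "\<exists>!w. is_child (2 ^ r) v w"
      using Pcls_subset_Zn2[of r i] by (intro ex1_child) blast
    fix w
    assume "is_child (2 ^ r) v w"
    then show "w \<in> Pcls r (i + 1)"
      using child_of_Pcls[OF \<open>i < 2 * r\<close> \<open>v \<in> Pcls r i\<close>] by (simp add: is_child_iff)
  qed
  moreover have "is_child (2 ^ r) (0, 0) (0, 0)"
    using origin by (simp add: is_child_iff modpair_def subadd_M_def)
  ultimately show ?thesis
    by (simp add: Pcls_top ex1_child[OF origin])
qed

end
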